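(* In the setting of the context, let $\bm s,\bm s'\in\mathcal S$ be starting magnetizations with $\bm s\ge\bm s'$ entrywise. Then for every $t\ge0$, entrywise, \[ \mathbf 0\le\big(\mathbb E_{\bm s}S^{(i)}_t-\mathbb E_{\bm s'}S^{(i)}_t\big)_{i=1}^m\le\mathbf Q_n^t(\bm s-\bm s'), \] where $\mathbb E_{\bm s}$ denotes expectation for the magnetization chain started at $\bm s$.
   Context: Fix $m\ge1$, proportions $p_1,\dots,p_m>0$ with $\sum_ip_i=1$, a symmetric matrix $\mathbf K=(k_{ij})$ with all $k_{ij}>0$, and $\beta\ge0$; $n$ is a positive integer with $np_i\in\mathbb N$. The vertex set $V=\{1,\dots,n\}$ is partitioned into blocks $G_1,\dots,G_m$ with $|G_i|=np_i$; for $v\in G_i,w\in G_j$ put $K(v,w)=k_{ij}/n$. The Glauber dynamics $(\sigma_t)$ on $\Omega=\{-1,+1\}^V$ picks at each step a uniform random vertex $v$ and sets its spin to $\pm1$ with probability $\frac{1\pm\tanh(\beta S^v)}2$, $S^v=\sum_{w\ne v}K(v,w)\sigma(w)$. The magnetization chain is $\bm S_t=(S_t^{(1)},\dots,S_t^{(m)})$ with $S_t^{(i)}=\frac1n\sum_{v\in G_i}\sigma_t(v)$; it is a Markov chain on $\mathcal S=\prod_i\{-p_i,-p_i+2/n,\dots,p_i\}$. Let $\mathbf B=(p_ik_{ij})$ and $\mathbf Q_n=(1-\frac1n)\mathbf I_m+\frac\beta n\mathbf B$. *)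

theory Defs
  imports "HOL-Probability.Probability"
begin

text \<open>Vertices are V = {1..n}; blk v \<in> {0..<m} is the block index of vertex v
  (blocks indexed 0..m-1 instead of 1..m).\<close>

definition verts :: "nat \<Rightarrow> nat set" where
  "verts n = {1..n}"

definition spin_configs :: "nat \<Rightarrow> (nat \<Rightarrow> real) set" where
  "spin_configs n = {\<sigma>. (\<forall>v\<in>verts n. \<sigma> v = 1 \<or> \<sigma> v = -1) \<and> (\<forall>v. v \<notin> verts n \<longrightarrow> \<sigma> v = 0)}"

definition Kint :: "nat \<Rightarrow> (nat \<Rightarrow> nat) \<Rightarrow> (nat \<Rightarrow> nat \<Rightarrow> real) \<Rightarrow> nat \<Rightarrow> nat \<Rightarrow> real" where
  "Kint n blk k v w = k (blk v) (blk w) / real n"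

definition local_field :: "nat \<Rightarrow> (nat \<Rightarrow> nat) \<Rightarrow> (nat \<Rightarrow> nat \<Rightarrow> real) \<Rightarrow> (nat \<Rightarrow> real) \<Rightarrow> nat \<Rightarrow> real" where
  "local_field n blk k \<sigma> v = (\<Sum>w\<in>verts n - {v}. Kint n blk k v w * \<sigma> w)"

definition glauber_step :: "nat \<Rightarrow> (nat \<Rightarrow> nat) \<Rightarrow> (nat \<Rightarrow> nat \<Rightarrow> real) \<Rightarrow> real \<Rightarrow> (nat \<Rightarrow> real) \<Rightarrow> (nat \<Rightarrow> real) pmf" where
  "glauber_step n blk k \<beta> \<sigma> =
     pmf_of_set (verts n) \<bind> (\<lambda>v.
     bernoulli_pmf ((1 + tanh (\<beta> * local_field n blk k \<sigma> v)) / 2) \<bind> (\<lambda>b.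
     return_pmf (\<sigma>(v := (if b then 1 else -1)))))"

definition glauber_dist :: "nat \<Rightarrow> (nat \<Rightarrow> nat) \<Rightarrow> (nat \<Rightarrow> nat \<Rightarrow> real) \<Rightarrow> real \<Rightarrow> (nat \<Rightarrow> real) \<Rightarrow> nat \<Rightarrow> (nat \<Rightarrow> real) pmf" where
  "glauber_dist n blk k \<beta> \<sigma> t = ((\<lambda>\<mu>. \<mu> \<bind> glauber_step n blk k \<beta>) ^^ t) (return_pmf \<sigma>)"

definition magnet :: "nat \<Rightarrow> (nat \<Rightarrow> nat) \<Rightarrow> (nat \<Rightarrow> real) \<Rightarrow> nat \<Rightarrow> real" where
  "magnet n blk \<sigma> i = (\<Sum>v\<in>{v\<in>verts n. blk v = i}. \<sigma> v) / real n"

definition exp_magnet :: "nat \<Rightarrow> (nat \<Rightarrow> nat) \<Rightarrow> (nat \<Rightarrow> nat \<Rightarrow> real) \<Rightarrow> real \<Rightarrow> (nat \<Rightarrow> real) \<Rightarrow> nat \<Rightarrow> nat \<Rightarrow> real" where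
  "exp_magnet n blk k \<beta> \<sigma> t i =
     measure_pmf.expectation (glauber_dist n blk k \<beta> \<sigma> t) (\<lambda>\<tau>. magnet n blk \<tau> i)"

definition Qmat :: "nat \<Rightarrow> (nat \<Rightarrow> real) \<Rightarrow> (nat \<Rightarrow> nat \<Rightarrow> real) \<Rightarrow> real \<Rightarrow> nat \<Rightarrow> nat \<Rightarrow> real" where
  "Qmat n p k \<beta> i j = (if i = j then 1 - 1 / real n else 0) + \<beta> / real n * (p i * k i j)"

definition mat_vec :: "nat \<Rightarrow> (nat \<Rightarrow> nat \<Rightarrow> real) \<Rightarrow> (nat \<Rightarrow> real) \<Rightarrow> nat \<Rightarrow> real" where
  "mat_vec m A x = (\<lambda>i. \<Sum>j<m. A i j * x j)"

definition mat_pow_vec :: "nat \<Rightarrow> (nat \<Rightarrow> nat \<Rightarrow> real) \<Rightarrow> nat \<Rightarrow> (nat \<Rightarrow> real) \<Rightarrow> nat \<Rightarrow> real" where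
  "mat_pow_vec m A t x = (mat_vec m A ^^ t) x"

end

theory Submission
  imports Defs
begin

text \<open>Turning one spin \<open>u\<close> of block \<open>b\<close> from \<open>-1\<close> to \<open>+1\<close> raises every expected block
  magnetization at time \<open>t\<close> by an amount between \<open>0\<close> and the corresponding entry of
  \<open>Q\<^sub>n\<^sup>t (2/n e\<^sub>b)\<close>. This is proved by induction on \<open>t\<close> via the first step of the chain:
  when a vertex \<open>v \<noteq> u\<close> is resampled, the two configurations set it to \<open>+1\<close> with
  probabilities \<open>q' \<le> q\<close>, where \<open>q - q' \<le> \<beta> K(v,u)\<close> because \<open>tanh\<close> is increasing and
  1-Lipschitz; coupling the two coins and applying the induction hypothesis to the resulting
  pairs of configurations reproduces one multiplication by \<open>Q\<^sub>n\<close> after averaging over \<open>v\<close>.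

  The law of the magnetization chain depends only on the starting magnetization, since
  permuting vertices within a block is a symmetry of the dynamics. Hence \<open>\<sigma>\<close> may be
  replaced by the configuration obtained from \<open>\<sigma>'\<close> by turning up suitable \<open>-1\<close> spins in
  each block, and the single-flip bounds add up by linearity of \<open>Q\<^sub>n\<^sup>t\<close>.\<close>

lemma finite_verts: "finite (verts n)"
  by (simp add: verts_def)

lemma tanh_diff_le:
  fixes a b :: real
  assumes "b \<le> a"
  shows "tanh a - tanh b \<le> a - b"
proof -
  have "(\<lambda>x. x - tanh x) b \<le> (\<lambda>x. x - tanh x) a"
  proof (rule DERIV_nonneg_imp_nondecreasing[OF assms])
    fix x :: real
    have "cosh x \<noteq> 0"
      by (metis cosh_real_pos less_irrefl)
    then have "DERIV (\<lambda>x. x - tanh x) x :> 1 - (1 - tanh x ^ 2)"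
      by (auto intro!: derivative_eq_intros)
    then show "\<exists>y. DERIV (\<lambda>x. x - tanh x) x :> y \<and> 0 \<le> y"
      by fastforce
  qed
  then show ?thesis
    by simp
qed

text \<open>The decomposition
  \<open>q' (a\<^sub>1 - b\<^sub>1) + (1 - q) (a\<^sub>2 - b\<^sub>2) + (q - q') (a\<^sub>1 - b\<^sub>2)\<close>
  used below is the monotone coupling of two coins with biases \<open>q' \<le> q\<close>.\<close>
lemma mixture_diff_bounds:
  fixes q q' a1 a2 b1 b2 c c' :: real
  assumes q: "0 \<le> q'" "q' \<le> q" "q \<le> 1"
    and ab1: "0 \<le> a1 - b1" "a1 - b1 \<le> c"
    and ab2: "0 \<le> a2 - b2" "a2 - b2 \<le> c"
    and aa: "0 \<le> a1 - a2" "a1 - a2 \<le> c'"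
  shows "0 \<le> (q * a1 + (1 - q) * a2) - (q' * b1 + (1 - q') * b2)"
    and "(q * a1 + (1 - q) * a2) - (q' * b1 + (1 - q') * b2) \<le> c + (q - q') * c'"
proof -
  have split: "(q * a1 + (1 - q) * a2) - (q' * b1 + (1 - q') * b2)
      = q' * (a1 - b1) + (1 - q) * (a2 - b2) + (q - q') * ((a1 - a2) + (a2 - b2))"
    by (simp add: algebra_simps)
  have "q' * (a1 - b1) \<le> q' * c" "(1 - q) * (a2 - b2) \<le> (1 - q) * c"
    "(q - q') * ((a1 - a2) + (a2 - b2)) \<le> (q - q') * (c' + c)"
    using q ab1 ab2 aa by (auto intro!: mult_left_mono)
  then show "(q * a1 + (1 - q) * a2) - (q' * b1 + (1 - q') * b2) \<le> c + (q - q') * c'"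
    unfolding split by (simp add: algebra_simps)
  show "0 \<le> (q * a1 + (1 - q) * a2) - (q' * b1 + (1 - q') * b2)"
    unfolding split using q ab1 ab2 aa by simp
qed

lemma mat_pow_vec_Suc: "mat_pow_vec m A (Suc t) x = mat_vec m A (mat_pow_vec m A t x)"
  by (simp add: mat_pow_vec_def)

lemma mat_pow_vec_Suc_right: "mat_pow_vec m A (Suc t) x = mat_pow_vec m A t (mat_vec m A x)"
  by (simp add: mat_pow_vec_def funpow_swap1)

lemma mat_pow_vec_cong:
  assumes "\<And>j. j < m \<Longrightarrow> x j = y j" "i < m"
  shows "mat_pow_vec m A t x i = mat_pow_vec m A t y i"
  using assms(2)
proof (induction t arbitrary: i)
  case 0
  then show ?case using assms(1) by (simp add: mat_pow_vec_def)
next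
  case (Suc t)
  then show ?case by (simp add: mat_pow_vec_Suc mat_vec_def)
qed

lemma mat_pow_vec_lincomb:
  assumes "finite L"
  shows "mat_pow_vec m A t (\<lambda>j. \<Sum>l\<in>L. c l * x l j) i = (\<Sum>l\<in>L. c l * mat_pow_vec m A t (x l) i)"
proof (induction t arbitrary: i)
  case 0
  then show ?case by (simp add: mat_pow_vec_def)
next
  case (Suc t)
  then show ?case
    by (simp add: mat_pow_vec_Suc mat_vec_def sum_distrib_left algebra_simps sum.swap[of _ L])
qed

lemma glauber_dist_Suc:
  "glauber_dist n blk k \<beta> \<sigma> (Suc t) = glauber_step n blk k \<beta> \<sigma> \<bind> (\<lambda>\<tau>. glauber_dist n blk k \<beta> \<tau> t)"
proof (induction t)
  case 0
  then show ?case by (simp add: glauber_dist_def bind_return_pmf bind_return_pmf')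
next
  case (Suc t)
  have "glauber_dist n blk k \<beta> \<sigma> (Suc (Suc t))
      = glauber_dist n blk k \<beta> \<sigma> (Suc t) \<bind> glauber_step n blk k \<beta>"
    by (simp add: glauber_dist_def)
  also have "\<dots> = glauber_step n blk k \<beta> \<sigma>
      \<bind> (\<lambda>\<tau>. glauber_dist n blk k \<beta> \<tau> t \<bind> glauber_step n blk k \<beta>)"
    by (simp add: Suc bind_assoc_pmf)
  also have "\<dots> = glauber_step n blk k \<beta> \<sigma> \<bind> (\<lambda>\<tau>. glauber_dist n blk k \<beta> \<tau> (Suc t))"
    by (simp add: glauber_dist_def)
  finally show ?case .
qed

lemma finite_set_glauber_step: "1 \<le> n \<Longrightarrow> finite (set_pmf (glauber_step n blk k \<beta> \<sigma>))"
  unfolding glauber_step_def verts_def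
  by (auto simp: set_bind_pmf intro!: finite_UN_I)

lemma finite_set_glauber_dist: "1 \<le> n \<Longrightarrow> finite (set_pmf (glauber_dist n blk k \<beta> \<sigma> t))"
proof (induction t arbitrary: \<sigma>)
  case 0
  then show ?case by (simp add: glauber_dist_def)
next
  case (Suc t)
  then show ?case by (simp add: glauber_dist_Suc set_bind_pmf finite_set_glauber_step)
qed

lemma exp_magnet_0: "exp_magnet n blk k \<beta> \<sigma> 0 i = magnet n blk \<sigma> i"
  by (simp add: exp_magnet_def glauber_dist_def)

definition up_prob :: "nat \<Rightarrow> (nat \<Rightarrow> nat) \<Rightarrow> (nat \<Rightarrow> nat \<Rightarrow> real) \<Rightarrow> real \<Rightarrow> (nat \<Rightarrow> real) \<Rightarrow> nat \<Rightarrow> real"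
  where "up_prob n blk k \<beta> \<sigma> v = (1 + tanh (\<beta> * local_field n blk k \<sigma> v)) / 2"

lemma up_prob_bounds: "0 < up_prob n blk k \<beta> \<sigma> v" "up_prob n blk k \<beta> \<sigma> v < 1"
  using tanh_real_bounds[of "\<beta> * local_field n blk k \<sigma> v"] by (auto simp: up_prob_def)

definition resample_mean ::
    "nat \<Rightarrow> (nat \<Rightarrow> nat) \<Rightarrow> (nat \<Rightarrow> nat \<Rightarrow> real) \<Rightarrow> real \<Rightarrow> ((nat \<Rightarrow> real) \<Rightarrow> real) \<Rightarrow> (nat \<Rightarrow> real) \<Rightarrow> nat \<Rightarrow> real"
  where "resample_mean n blk k \<beta> H \<sigma> v =
    up_prob n blk k \<beta> \<sigma> v * H (\<sigma>(v := 1)) + (1 - up_prob n blk k \<beta> \<sigma> v) * H (\<sigma>(v := -1))"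

lemma exp_magnet_Suc:
  assumes "1 \<le> n"
  shows "exp_magnet n blk k \<beta> \<sigma> (Suc t) i =
    (\<Sum>v\<in>verts n. resample_mean n blk k \<beta> (\<lambda>\<rho>. exp_magnet n blk k \<beta> \<rho> t i) \<sigma> v) / real n"
proof -
  let ?q = "up_prob n blk k \<beta> \<sigma>"
  define D where "D = (\<lambda>v. bernoulli_pmf (?q v)
    \<bind> (\<lambda>b. glauber_dist n blk k \<beta> (\<sigma>(v := (if b then 1 else -1))) t))"
  have dist: "glauber_dist n blk k \<beta> \<sigma> (Suc t) = pmf_of_set (verts n) \<bind> D"
    by (simp add: D_def glauber_dist_Suc glauber_step_def bind_assoc_pmf bind_return_pmf up_prob_def)
  have V: "verts n \<noteq> {}" "finite (verts n)" "card (verts n) = n"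
    using assms by (auto simp: verts_def)
  have finD: "finite (set_pmf (D v))" for v
    using assms by (auto simp: D_def set_bind_pmf finite_set_glauber_dist)
  have ED: "measure_pmf.expectation (D v) (\<lambda>\<tau>. magnet n blk \<tau> i)
      = resample_mean n blk k \<beta> (\<lambda>\<rho>. exp_magnet n blk k \<beta> \<rho> t i) \<sigma> v" for v
    unfolding D_def
    by (subst pmf_expectation_bind[where A = UNIV])
      (use assms up_prob_bounds[of n blk k \<beta> \<sigma> v] in
        \<open>auto simp: finite_set_glauber_dist UNIV_bool exp_magnet_def resample_mean_def\<close>)
  have "exp_magnet n blk k \<beta> \<sigma> (Suc t) i
      = (\<Sum>v\<in>verts n. measure_pmf.expectation (D v) (\<lambda>\<tau>. magnet n blk \<tau> i) /\<^sub>R real (card (verts n)))"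
    unfolding exp_magnet_def dist by (rule pmf_expectation_bind_pmf_of_set[OF V(1,2) finD])
  then show ?thesis
    by (simp add: ED V(3) sum_distrib_left divide_inverse_commute)
qed

lemma local_field_upd_self: "local_field n blk k (\<tau>(u := a)) u = local_field n blk k \<tau> u"
  unfolding local_field_def by (auto intro!: sum.cong)

lemma local_field_upd_other:
  assumes "u \<in> verts n" "u \<noteq> v"
  shows "local_field n blk k (\<tau>(u := a)) v = local_field n blk k \<tau> v + (a - \<tau> u) * Kint n blk k v u"
proof -
  have fin: "finite (verts n - {v})" by (simp add: verts_def)
  have u: "u \<in> verts n - {v}" using assms by auto
  have "local_field n blk k (\<tau>(u := a)) v
      = Kint n blk k v u * a + (\<Sum>w\<in>verts n - {v} - {u}. Kint n blk k v w * \<tau> w)"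
    unfolding local_field_def by (subst sum.remove[OF fin u]) (auto intro!: sum.cong)
  moreover have "local_field n blk k \<tau> v
      = Kint n blk k v u * \<tau> u + (\<Sum>w\<in>verts n - {v} - {u}. Kint n blk k v w * \<tau> w)"
    unfolding local_field_def by (subst sum.remove[OF fin u]) auto
  ultimately show ?thesis by (simp add: algebra_simps)
qed

lemma fun_upd_in_spin_configs:
  "\<tau> \<in> spin_configs n \<Longrightarrow> v \<in> verts n \<Longrightarrow> b = 1 \<or> b = -1 \<Longrightarrow> \<tau>(v := b) \<in> spin_configs n"
  unfolding spin_configs_def by auto

lemma magnet_upd:
  assumes "u \<in> verts n"
  shows "magnet n blk (\<tau>(u := a)) i = magnet n blk \<tau> i + (if blk u = i then (a - \<tau> u) / real n else 0)"
proof -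
  have fin: "finite {v \<in> verts n. blk v = i}" by (simp add: verts_def)
  show ?thesis
  proof (cases "blk u = i")
    case True
    then have u: "u \<in> {v \<in> verts n. blk v = i}" using assms by auto
    show ?thesis unfolding magnet_def using True
      by (simp add: sum.remove[OF fin u] add_divide_distrib diff_divide_distrib)
  next
    case False
    then show ?thesis
      unfolding magnet_def by (auto intro!: sum.cong arg_cong[where f = "\<lambda>x. x / _"])
  qed
qed

definition flip_up :: "nat set \<Rightarrow> (nat \<Rightarrow> real) \<Rightarrow> nat \<Rightarrow> real"
  where "flip_up A \<sigma> = (\<lambda>v. if v \<in> A then 1 else \<sigma> v)"

lemma flip_up_in_spin_configs:
  "A \<subseteq> verts n \<Longrightarrow> \<sigma> \<in> spin_configs n \<Longrightarrow> flip_up A \<sigma> \<in> spin_configs n"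
  unfolding spin_configs_def flip_up_def by auto

lemma magnet_flip_up:
  assumes "A \<subseteq> verts n" "\<forall>u\<in>A. \<sigma> u = -1"
  shows "magnet n blk (flip_up A \<sigma>) j = magnet n blk \<sigma> j + 2 * real (card {u\<in>A. blk u = j}) / real n"
proof -
  have fin: "finite {v\<in>verts n. blk v = j}" by (simp add: verts_def)
  have AG: "{v\<in>verts n. blk v = j} \<inter> A = {u\<in>A. blk u = j}" using assms(1) by auto
  have "(\<Sum>v\<in>{v\<in>verts n. blk v = j}. flip_up A \<sigma> v)
      = (\<Sum>v\<in>{v\<in>verts n. blk v = j}. \<sigma> v + (if v \<in> A then 2 else 0))"
    using assms(2) by (intro sum.cong) (auto simp: flip_up_def)
  also have "\<dots> = (\<Sum>v\<in>{v\<in>verts n. blk v = j}. \<sigma> v) + 2 * real (card {u\<in>A. blk u = j})"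
    by (simp add: sum.distrib sum.If_cases[OF fin] AG)
  finally show ?thesis
    by (simp add: magnet_def add_divide_distrib)
qed

locale block_glauber =
  fixes m n :: nat and blk :: "nat \<Rightarrow> nat" and k :: "nat \<Rightarrow> nat \<Rightarrow> real" and \<beta> :: real
  assumes n_pos: "1 \<le> n" and blk_range: "\<forall>v\<in>verts n. blk v < m"
begin

abbreviation E where "E \<sigma> t i \<equiv> exp_magnet n blk k \<beta> \<sigma> t i"

lemma magnet_eq_0:
  assumes "m \<le> j"
  shows "magnet n blk \<sigma> j = 0"
proof -
  have "{v\<in>verts n. blk v = j} = {}"
    using assms blk_range by force
  then show ?thesis
    unfolding magnet_def by (simp only: sum.empty div_0)
qed

definition spin_class :: "(nat \<Rightarrow> real) \<Rightarrow> nat \<Rightarrow> real \<Rightarrow> nat set"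
  where "spin_class \<sigma> j b = {v \<in> verts n. blk v = j \<and> \<sigma> v = b}"

lemma finite_spin_class: "finite (spin_class \<sigma> j b)"
  by (simp add: spin_class_def verts_def)

lemma real_card_spin_class:
  assumes \<sigma>: "\<sigma> \<in> spin_configs n"
  shows "real (card (spin_class \<sigma> j 1)) = (real (card {v\<in>verts n. blk v = j}) + real n * magnet n blk \<sigma> j) / 2"
    and "real (card (spin_class \<sigma> j (-1))) = (real (card {v\<in>verts n. blk v = j}) - real n * magnet n blk \<sigma> j) / 2"
proof -
  have block: "{v\<in>verts n. blk v = j} = spin_class \<sigma> j 1 \<union> spin_class \<sigma> j (-1)"
    using \<sigma> by (auto simp: spin_class_def spin_configs_def)
  have disj: "spin_class \<sigma> j 1 \<inter> spin_class \<sigma> j (-1) = {}"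
    by (auto simp: spin_class_def)
  have card: "card {v\<in>verts n. blk v = j} = card (spin_class \<sigma> j 1) + card (spin_class \<sigma> j (-1))"
    unfolding block by (rule card_Un_disjoint[OF finite_spin_class finite_spin_class disj])
  have "real n * magnet n blk \<sigma> j = (\<Sum>v\<in>{v\<in>verts n. blk v = j}. \<sigma> v)"
    using n_pos by (simp add: magnet_def)
  also have "\<dots> = (\<Sum>v\<in>spin_class \<sigma> j 1. \<sigma> v) + (\<Sum>v\<in>spin_class \<sigma> j (-1). \<sigma> v)"
    unfolding block by (rule sum.union_disjoint[OF finite_spin_class finite_spin_class disj])
  also have "\<dots> = real (card (spin_class \<sigma> j 1)) - real (card (spin_class \<sigma> j (-1)))"
    by (simp add: spin_class_def)
  finally show "real (card (spin_class \<sigma> j 1)) = (real (card {v\<in>verts n. blk v = j}) + real n * magnet n blk \<sigma> j) / 2"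
    and "real (card (spin_class \<sigma> j (-1))) = (real (card {v\<in>verts n. blk v = j}) - real n * magnet n blk \<sigma> j) / 2"
    using card by simp_all
qed

lemma sum_eq_if_magnet_eq:
  fixes F F' :: "nat \<Rightarrow> 'a::comm_monoid_add"
  assumes \<sigma>: "\<sigma> \<in> spin_configs n" and \<sigma>': "\<sigma>' \<in> spin_configs n"
    and magnet_eq: "\<And>j. j < m \<Longrightarrow> magnet n blk \<sigma> j = magnet n blk \<sigma>' j"
    and F_eq: "\<And>v w. v \<in> verts n \<Longrightarrow> w \<in> verts n \<Longrightarrow> blk v = blk w \<Longrightarrow> \<sigma> v = \<sigma>' w \<Longrightarrow> F v = F' w"
  shows "(\<Sum>v\<in>verts n. F v) = (\<Sum>v\<in>verts n. F' v)"
proof -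
  let ?T = "{..<m} \<times> {1, -1 :: real}"
  have by_class: "(\<Sum>v\<in>verts n. G v) = (\<Sum>y\<in>?T. \<Sum>v\<in>spin_class \<rho> (fst y) (snd y). G v)"
    if "\<rho> \<in> spin_configs n" for \<rho> and G :: "nat \<Rightarrow> 'a"
  proof -
    have image: "(\<lambda>v. (blk v, \<rho> v)) ` verts n \<subseteq> ?T"
      using that blk_range by (auto simp: spin_configs_def)
    have "(\<Sum>y\<in>?T. \<Sum>v\<in>{v. v \<in> verts n \<and> (blk v, \<rho> v) = y}. G v) = (\<Sum>v\<in>verts n. G v)"
      by (rule sum.group[OF finite_verts _ image]) simp
    moreover have "{v. v \<in> verts n \<and> (blk v, \<rho> v) = y} = spin_class \<rho> (fst y) (snd y)" for y
      by (auto simp: spin_class_def)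
    ultimately show ?thesis
      by simp
  qed
  have class_sum_eq: "(\<Sum>v\<in>spin_class \<sigma> (fst y) (snd y). F v) = (\<Sum>w\<in>spin_class \<sigma>' (fst y) (snd y). F' w)"
    if y_in: "y \<in> ?T" for y
  proof -
    let ?C = "spin_class \<sigma> (fst y) (snd y)" and ?C' = "spin_class \<sigma>' (fst y) (snd y)"
    obtain j b where y: "y = (j, b)" and j: "j < m" and b: "b = 1 \<or> b = -1"
      using y_in by auto
    have "real (card ?C) = real (card ?C')"
      using b real_card_spin_class[OF \<sigma>, of j] real_card_spin_class[OF \<sigma>', of j] magnet_eq[OF j]
      unfolding y by auto
    then have "card ?C = card ?C'"
      by (simp only: of_nat_eq_iff)
    then obtain h where h: "bij_betw h ?C ?C'"
      using finite_same_card_bij[OF finite_spin_class finite_spin_class] by metis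
    have "F v = F' (h v)" if "v \<in> ?C" for v
      using that bij_betwE[OF h] by (intro F_eq) (auto simp: spin_class_def)
    then have "(\<Sum>v\<in>?C. F v) = (\<Sum>v\<in>?C. F' (h v))"
      by (rule sum.cong[OF refl])
    also have "\<dots> = (\<Sum>w\<in>?C'. F' w)"
      by (rule sum.reindex_bij_betw[OF h])
    finally show ?thesis .
  qed
  show ?thesis
    unfolding by_class[OF \<sigma>, of F] by_class[OF \<sigma>', of F']
    by (rule sum.cong[OF refl]) (rule class_sum_eq)
qed

lemma local_field_eq_magnet:
  assumes "v \<in> verts n"
  shows "local_field n blk k \<sigma> v
    = (\<Sum>j<m. k (blk v) j * magnet n blk \<sigma> j) - k (blk v) (blk v) * \<sigma> v / real n"
proof -
  have fin: "finite (verts n)" by (simp add: verts_def)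
  have "local_field n blk k \<sigma> v = (\<Sum>w\<in>verts n. Kint n blk k v w * \<sigma> w) - Kint n blk k v v * \<sigma> v"
    unfolding local_field_def using assms fin by (simp add: sum_diff1)
  also have "(\<Sum>w\<in>verts n. Kint n blk k v w * \<sigma> w)
      = (\<Sum>j<m. \<Sum>w\<in>{w\<in>verts n. blk w = j}. Kint n blk k v w * \<sigma> w)"
    by (rule sum.group[symmetric]) (use blk_range fin in auto)
  also have "\<dots> = (\<Sum>j<m. k (blk v) j * magnet n blk \<sigma> j)"
    by (rule sum.cong) (auto simp: Kint_def magnet_def sum_distrib_left sum_divide_distrib)
  finally show ?thesis by (simp add: Kint_def)
qed

lemma exp_magnet_eq_if_magnet_eq:
  assumes "\<sigma> \<in> spin_configs n" "\<sigma>' \<in> spin_configs n"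
    and "\<And>j. j < m \<Longrightarrow> magnet n blk \<sigma> j = magnet n blk \<sigma>' j"
  shows "E \<sigma> t i = E \<sigma>' t i"
  using assms
proof (induction t arbitrary: \<sigma> \<sigma>' i)
  case 0
  then show ?case by (cases "i < m") (auto simp: exp_magnet_0 magnet_eq_0)
next
  case (Suc t)
  have "(\<Sum>v\<in>verts n. resample_mean n blk k \<beta> (\<lambda>\<rho>. E \<rho> t i) \<sigma> v)
      = (\<Sum>v\<in>verts n. resample_mean n blk k \<beta> (\<lambda>\<rho>. E \<rho> t i) \<sigma>' v)"
  proof (rule sum_eq_if_magnet_eq[OF Suc.prems])
    fix v w
    assume v: "v \<in> verts n" and w: "w \<in> verts n" and same: "blk v = blk w" "\<sigma> v = \<sigma>' w"
    have "up_prob n blk k \<beta> \<sigma> v = up_prob n blk k \<beta> \<sigma>' w"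
      unfolding up_prob_def local_field_eq_magnet[OF v] local_field_eq_magnet[OF w]
      using same Suc.prems(3) by simp
    moreover have "E (\<sigma>(v := b)) t i = E (\<sigma>'(w := b)) t i" if "b = 1 \<or> b = -1" for b
    proof (rule Suc.IH)
      show "\<sigma>(v := b) \<in> spin_configs n" "\<sigma>'(w := b) \<in> spin_configs n"
        using fun_upd_in_spin_configs Suc.prems(1,2) v w that by auto
      show "magnet n blk (\<sigma>(v := b)) j = magnet n blk (\<sigma>'(w := b)) j" if "j < m" for j
        unfolding magnet_upd[OF v] magnet_upd[OF w] using same Suc.prems(3)[OF that] by simp
    qed
    ultimately show "resample_mean n blk k \<beta> (\<lambda>\<rho>. E \<rho> t i) \<sigma> v
        = resample_mean n blk k \<beta> (\<lambda>\<rho>. E \<rho> t i) \<sigma>' w"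
      by (simp add: resample_mean_def)
  qed
  then show ?case
    by (simp add: exp_magnet_Suc[OF n_pos])
qed

lemma obtain_flip_set:
  assumes \<sigma>: "\<sigma> \<in> spin_configs n" and \<sigma>': "\<sigma>' \<in> spin_configs n"
    and ge: "\<forall>j<m. magnet n blk \<sigma>' j \<le> magnet n blk \<sigma> j"
  obtains A where "A \<subseteq> verts n" "\<forall>u\<in>A. \<sigma>' u = -1"
    "\<And>j. j < m \<Longrightarrow> 2 * real (card {u\<in>A. blk u = j}) / real n = magnet n blk \<sigma> j - magnet n blk \<sigma>' j"
proof -
  define d where "d j = card (spin_class \<sigma> j 1) - card (spin_class \<sigma>' j 1)" for j
  have d: "2 * real (d j) / real n = magnet n blk \<sigma> j - magnet n blk \<sigma>' j"
    and d_le: "d j \<le> card (spin_class \<sigma>' j (-1))" if "j < m" for j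
  proof -
    have "real n * magnet n blk \<sigma>' j \<le> real n * magnet n blk \<sigma> j"
      using ge that by (simp add: mult_left_mono)
    then have "card (spin_class \<sigma>' j 1) \<le> card (spin_class \<sigma> j 1)"
      using real_card_spin_class(1)[OF \<sigma>, of j] real_card_spin_class(1)[OF \<sigma>', of j] by simp
    then have "real (d j) = real (card (spin_class \<sigma> j 1)) - real (card (spin_class \<sigma>' j 1))"
      by (simp add: d_def of_nat_diff)
    then show "2 * real (d j) / real n = magnet n blk \<sigma> j - magnet n blk \<sigma>' j"
      and "d j \<le> card (spin_class \<sigma>' j (-1))"
      using real_card_spin_class[OF \<sigma>, of j] real_card_spin_class[OF \<sigma>', of j] n_pos
      by (simp_all add: field_simps)
  qed
  have "\<forall>j\<in>{..<m}. \<exists>S. S \<subseteq> spin_class \<sigma>' j (-1) \<and> card S = d j"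
    using d_le by (metis lessThan_iff obtain_subset_with_card_n)
  then obtain S where S: "\<And>j. j < m \<Longrightarrow> S j \<subseteq> spin_class \<sigma>' j (-1) \<and> card (S j) = d j"
    by (metis lessThan_iff bchoice)
  define A where "A = (\<Union>j<m. S j)"
  have S_sub: "S j \<subseteq> spin_class \<sigma>' j (-1)" if "j < m" for j
    using S that by blast
  have "{u\<in>A. blk u = j} = S j" if "j < m" for j
    using S_sub that by (auto simp: A_def spin_class_def)
  moreover have "A \<subseteq> verts n" "\<forall>u\<in>A. \<sigma>' u = -1"
    using S_sub by (auto simp: A_def spin_class_def)
  ultimately show ?thesis
    using S d that by simp
qed

end

locale ferro_block_glauber = block_glauber +
  fixes p :: "nat \<Rightarrow> real"
  assumes k_nonneg: "\<forall>i<m. \<forall>j<m. 0 \<le> k i j" and beta_nonneg: "0 \<le> \<beta>"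
    and blk_size: "\<forall>i<m. real (card {v\<in>verts n. blk v = i}) = real n * p i"
begin

abbreviation Q where "Q \<equiv> Qmat n p k \<beta>"

lemma Kint_nonneg: "v \<in> verts n \<Longrightarrow> u \<in> verts n \<Longrightarrow> 0 \<le> Kint n blk k v u"
  using k_nonneg blk_range by (simp add: Kint_def)

text \<open>\<open>Q\<^sup>t\<close> applied to the jump \<open>2/n e\<^sub>b\<close> of the magnetization vector caused by turning
  one spin of block \<open>b\<close> from \<open>-1\<close> to \<open>+1\<close>.\<close>
definition flip_response :: "nat \<Rightarrow> nat \<Rightarrow> nat \<Rightarrow> real"
  where "flip_response t b = mat_pow_vec m Q t (\<lambda>j. if j = b then 2 / real n else 0)"

lemma flip_response_Suc:
  assumes "b < m" "i < m"
  shows "flip_response (Suc t) b i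
    = (1 - 1 / real n) * flip_response t b i + \<beta> / real n * (\<Sum>j<m. p j * k j b * flip_response t j i)"
proof -
  have "flip_response (Suc t) b i
      = mat_pow_vec m Q t (\<lambda>j. \<Sum>l<m. Q l b * (if j = l then 2 / real n else 0)) i"
    unfolding flip_response_def mat_pow_vec_Suc_right
    by (rule mat_pow_vec_cong[OF _ assms(2)]) (auto simp: mat_vec_def assms(1) if_distrib cong: if_cong)
  also have "\<dots> = (\<Sum>l<m. Q l b * flip_response t l i)"
    by (subst mat_pow_vec_lincomb) (auto simp: flip_response_def)
  also have "\<dots> = (\<Sum>l<m. (if l = b then (1 - 1 / real n) * flip_response t l i else 0)
      + \<beta> / real n * (p l * k l b * flip_response t l i))"
    by (rule sum.cong) (auto simp: Qmat_def algebra_simps)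
  also have "\<dots> = (1 - 1 / real n) * flip_response t b i + \<beta> / real n * (\<Sum>j<m. p j * k j b * flip_response t j i)"
    using assms by (simp add: sum.distrib sum_distrib_left)
  finally show ?thesis .
qed

lemma sum_verts_by_block: "(\<Sum>v\<in>verts n. g (blk v)) = (\<Sum>j<m. real n * p j * g j)"
proof -
  have "(\<Sum>v\<in>verts n. g (blk v)) = (\<Sum>j<m. \<Sum>v\<in>{v\<in>verts n. blk v = j}. g (blk v))"
    by (rule sum.group[symmetric]) (use blk_range finite_verts in auto)
  also have "\<dots> = (\<Sum>j<m. real (card {v\<in>verts n. blk v = j}) * g j)"
    by (rule sum.cong) auto
  also have "\<dots> = (\<Sum>j<m. real n * p j * g j)"
    using blk_size by auto
  finally show ?thesis .
qed

lemma sum_flip_bounds_eq: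
  assumes u: "u \<in> verts n" and i: "i < m"
  shows "(\<Sum>v\<in>verts n. (if v = u then 0 else flip_response t (blk u) i)
      + \<beta> * Kint n blk k v u * flip_response t (blk v) i)
    = real n * flip_response (Suc t) (blk u) i"
proof -
  have bu: "blk u < m"
    using blk_range u by blast
  have "(\<Sum>v\<in>verts n. if v = u then 0 else flip_response t (blk u) i)
      = (real n - 1) * flip_response t (blk u) i"
    using u n_pos by (simp add: sum.delta_remove finite_verts card_Diff_singleton verts_def of_nat_diff)
  moreover have "(\<Sum>v\<in>verts n. \<beta> * Kint n blk k v u * flip_response t (blk v) i)
      = \<beta> * (\<Sum>j<m. p j * k j (blk u) * flip_response t j i)"
    using sum_verts_by_block[of "\<lambda>j. \<beta> * (k j (blk u) / real n) * flip_response t j i"] n_pos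
    by (simp add: Kint_def sum_distrib_left algebra_simps)
  ultimately have "(\<Sum>v\<in>verts n. (if v = u then 0 else flip_response t (blk u) i)
      + \<beta> * Kint n blk k v u * flip_response t (blk v) i)
      = (real n - 1) * flip_response t (blk u) i + \<beta> * (\<Sum>j<m. p j * k j (blk u) * flip_response t j i)"
    by (simp only: sum.distrib)
  also have "\<dots> = real n * flip_response (Suc t) (blk u) i"
    using n_pos by (simp add: flip_response_Suc[OF bu i] field_simps)
  finally show ?thesis .
qed

lemma up_prob_flip_bounds:
  assumes u: "u \<in> verts n" "\<tau> u = -1" and v: "v \<in> verts n" "v \<noteq> u"
  shows "up_prob n blk k \<beta> \<tau> v \<le> up_prob n blk k \<beta> (\<tau>(u := 1)) v"
    and "up_prob n blk k \<beta> (\<tau>(u := 1)) v - up_prob n blk k \<beta> \<tau> v \<le> \<beta> * Kint n blk k v u"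
proof -
  define L where "L = local_field n blk k \<tau> v"
  define K where "K = Kint n blk k v u"
  have K: "0 \<le> K"
    unfolding K_def by (rule Kint_nonneg[OF v(1) u(1)])
  have "local_field n blk k (\<tau>(u := 1)) v = L + 2 * K"
    using local_field_upd_other[OF u(1)] u v by (simp add: L_def K_def)
  then have up: "up_prob n blk k \<beta> (\<tau>(u := 1)) v = (1 + tanh (\<beta> * L + 2 * (\<beta> * K))) / 2"
    and up': "up_prob n blk k \<beta> \<tau> v = (1 + tanh (\<beta> * L)) / 2"
    by (simp_all add: up_prob_def L_def algebra_simps)
  have "0 \<le> \<beta> * K"
    using beta_nonneg K by simp
  then have "tanh (\<beta> * L) \<le> tanh (\<beta> * L + 2 * (\<beta> * K))"
    and "tanh (\<beta> * L + 2 * (\<beta> * K)) - tanh (\<beta> * L) \<le> 2 * (\<beta> * K)"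
    using tanh_diff_le[of "\<beta> * L" "\<beta> * L + 2 * (\<beta> * K)"] by simp_all
  then show "up_prob n blk k \<beta> \<tau> v \<le> up_prob n blk k \<beta> (\<tau>(u := 1)) v"
    and "up_prob n blk k \<beta> (\<tau>(u := 1)) v - up_prob n blk k \<beta> \<tau> v \<le> \<beta> * Kint n blk k v u"
    unfolding up up' K_def[symmetric] by (simp_all add: field_simps)
qed

context
  fixes H :: "(nat \<Rightarrow> real) \<Rightarrow> real" and R :: "nat \<Rightarrow> real"
  assumes H_mono: "\<And>\<rho> w. \<rho> \<in> spin_configs n \<Longrightarrow> w \<in> verts n \<Longrightarrow> \<rho> w = -1 \<Longrightarrow> H \<rho> \<le> H (\<rho>(w := 1))"
    and H_flip: "\<And>\<rho> w. \<rho> \<in> spin_configs n \<Longrightarrow> w \<in> verts n \<Longrightarrow> \<rho> w = -1 \<Longrightarrow> H (\<rho>(w := 1)) - H \<rho> \<le> R (blk w)"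
begin

lemma resample_mean_flip_bounds_other:
  assumes \<tau>: "\<tau> \<in> spin_configs n" and u: "u \<in> verts n" "\<tau> u = -1" and v: "v \<in> verts n" "v \<noteq> u"
  shows "resample_mean n blk k \<beta> H \<tau> v \<le> resample_mean n blk k \<beta> H (\<tau>(u := 1)) v"
    and "resample_mean n blk k \<beta> H (\<tau>(u := 1)) v - resample_mean n blk k \<beta> H \<tau> v
      \<le> R (blk u) + \<beta> * Kint n blk k v u * R (blk v)"
proof -
  let ?a = "\<tau>(u := 1)"
  let ?q = "up_prob n blk k \<beta> ?a v" and ?q' = "up_prob n blk k \<beta> \<tau> v"
  have same_v: "H (\<tau>(v := b)) \<le> H (?a(v := b)) \<and> H (?a(v := b)) - H (\<tau>(v := b)) \<le> R (blk u)"
    if "b = 1 \<or> b = -1" for b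
  proof -
    have "\<tau>(v := b) \<in> spin_configs n" "(\<tau>(v := b)) u = -1" "?a(v := b) = (\<tau>(v := b))(u := 1)"
      using fun_upd_in_spin_configs[OF \<tau> v(1) that] u v(2) by (auto simp: fun_upd_twist)
    then show ?thesis
      using H_mono[OF _ u(1)] H_flip[OF _ u(1)] by simp
  qed
  have "?a(v := -1) \<in> spin_configs n"
    using fun_upd_in_spin_configs[OF \<tau> u(1)] fun_upd_in_spin_configs[OF _ v(1)] by simp
  then have flip_v: "H (?a(v := -1)) \<le> H (?a(v := 1)) \<and> H (?a(v := 1)) - H (?a(v := -1)) \<le> R (blk v)"
    using H_mono[OF _ v(1), of "?a(v := -1)"] H_flip[OF _ v(1), of "?a(v := -1)"] by simp
  have q: "0 \<le> ?q'" "?q' \<le> ?q" "?q \<le> 1" "?q - ?q' \<le> \<beta> * Kint n blk k v u"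
    using up_prob_bounds[of n blk k \<beta>] up_prob_flip_bounds[of u \<tau> v] u v by (simp_all add: less_imp_le)
  have "(?q - ?q') * R (blk v) \<le> \<beta> * Kint n blk k v u * R (blk v)"
    using q(4) flip_v by (intro mult_right_mono) simp_all
  then show "resample_mean n blk k \<beta> H \<tau> v \<le> resample_mean n blk k \<beta> H ?a v"
    and "resample_mean n blk k \<beta> H ?a v - resample_mean n blk k \<beta> H \<tau> v
      \<le> R (blk u) + \<beta> * Kint n blk k v u * R (blk v)"
    using mixture_diff_bounds[OF q(1-3), of "H (?a(v := 1))" "H (\<tau>(v := 1))" "R (blk u)"
        "H (?a(v := -1))" "H (\<tau>(v := -1))" "R (blk v)"] same_v flip_v
    unfolding resample_mean_def by auto
qed

lemma resample_mean_flip_bounds: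
  assumes \<tau>: "\<tau> \<in> spin_configs n" and u: "u \<in> verts n" "\<tau> u = -1" and v: "v \<in> verts n"
  shows "resample_mean n blk k \<beta> H \<tau> v \<le> resample_mean n blk k \<beta> H (\<tau>(u := 1)) v"
    and "resample_mean n blk k \<beta> H (\<tau>(u := 1)) v - resample_mean n blk k \<beta> H \<tau> v
      \<le> (if v = u then 0 else R (blk u)) + \<beta> * Kint n blk k v u * R (blk v)"
proof -
  have "0 \<le> R (blk u)"
    using H_mono[OF \<tau> u] H_flip[OF \<tau> u] by linarith
  then have "0 \<le> \<beta> * Kint n blk k u u * R (blk u)"
    using beta_nonneg Kint_nonneg[OF u(1) u(1)] by simp
  moreover have "resample_mean n blk k \<beta> H (\<tau>(u := 1)) u = resample_mean n blk k \<beta> H \<tau> u"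
    by (simp add: resample_mean_def up_prob_def local_field_upd_self)
  ultimately show "resample_mean n blk k \<beta> H \<tau> v \<le> resample_mean n blk k \<beta> H (\<tau>(u := 1)) v"
    and "resample_mean n blk k \<beta> H (\<tau>(u := 1)) v - resample_mean n blk k \<beta> H \<tau> v
      \<le> (if v = u then 0 else R (blk u)) + \<beta> * Kint n blk k v u * R (blk v)"
    using resample_mean_flip_bounds_other[OF \<tau> u v] by (cases "v = u"; simp)+
qed

end

lemma exp_magnet_flip_bounds:
  assumes "\<tau> \<in> spin_configs n" "u \<in> verts n" "\<tau> u = -1" "i < m"
  shows "E \<tau> t i \<le> E (\<tau>(u := 1)) t i \<and> E (\<tau>(u := 1)) t i - E \<tau> t i \<le> flip_response t (blk u) i"
  using assms
proof (induction t arbitrary: \<tau> u)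
  case 0
  then have "magnet n blk (\<tau>(u := 1)) i = magnet n blk \<tau> i + (if i = blk u then 2 / real n else 0)"
    by (auto simp: magnet_upd)
  moreover have "flip_response 0 (blk u) i = (if i = blk u then 2 / real n else 0)"
    by (simp add: flip_response_def mat_pow_vec_def)
  moreover have "0 \<le> (if i = blk u then 2 / real n else 0)"
    by simp
  ultimately show ?case
    unfolding exp_magnet_0 by (intro conjI) linarith+
next
  case (Suc t)
  let ?H = "\<lambda>\<rho>. E \<rho> t i" and ?R = "\<lambda>b. flip_response t b i"
  let ?M = "resample_mean n blk k \<beta> ?H"
  define bound where "bound v = (if v = u then 0 else ?R (blk u)) + \<beta> * Kint n blk k v u * ?R (blk v)" for v
  have IH: "?H \<rho> \<le> ?H (\<rho>(w := 1)) \<and> ?H (\<rho>(w := 1)) - ?H \<rho> \<le> ?R (blk w)"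
    if "\<rho> \<in> spin_configs n" "w \<in> verts n" "\<rho> w = -1" for \<rho> w
    using that Suc.prems(4) by (rule Suc.IH)
  then have H_mono: "?H \<rho> \<le> ?H (\<rho>(w := 1))" and H_flip: "?H (\<rho>(w := 1)) - ?H \<rho> \<le> ?R (blk w)"
    if "\<rho> \<in> spin_configs n" "w \<in> verts n" "\<rho> w = -1" for \<rho> w
    using that by (simp_all only:)
  have step: "?M \<tau> v \<le> ?M (\<tau>(u := 1)) v" "?M (\<tau>(u := 1)) v - ?M \<tau> v \<le> bound v"
    if "v \<in> verts n" for v
    using resample_mean_flip_bounds[of ?H ?R, OF H_mono H_flip Suc.prems(1-3) that]
    unfolding bound_def by (simp_all only:)
  have diff: "E (\<tau>(u := 1)) (Suc t) i - E \<tau> (Suc t) i = (\<Sum>v\<in>verts n. ?M (\<tau>(u := 1)) v - ?M \<tau> v) / real n"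
    by (simp add: exp_magnet_Suc[OF n_pos] sum_subtractf diff_divide_distrib)
  have "0 \<le> (\<Sum>v\<in>verts n. ?M (\<tau>(u := 1)) v - ?M \<tau> v)"
    using step(1) by (intro sum_nonneg) simp
  moreover have "(\<Sum>v\<in>verts n. ?M (\<tau>(u := 1)) v - ?M \<tau> v) \<le> (\<Sum>v\<in>verts n. bound v)"
    using step(2) by (rule sum_mono)
  moreover have "(\<Sum>v\<in>verts n. bound v) = real n * flip_response (Suc t) (blk u) i"
    unfolding bound_def by (rule sum_flip_bounds_eq[OF Suc.prems(2,4)])
  ultimately have "0 \<le> E (\<tau>(u := 1)) (Suc t) i - E \<tau> (Suc t) i"
    and "E (\<tau>(u := 1)) (Suc t) i - E \<tau> (Suc t) i \<le> flip_response (Suc t) (blk u) i"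
    unfolding diff using n_pos by (simp_all add: pos_divide_le_eq mult.commute)
  then show ?case
    by (intro conjI) linarith+
qed

lemma exp_magnet_flip_up_bounds:
  assumes "finite A" "A \<subseteq> verts n" "\<sigma> \<in> spin_configs n" "\<forall>u\<in>A. \<sigma> u = -1" "i < m"
  shows "E \<sigma> t i \<le> E (flip_up A \<sigma>) t i
    \<and> E (flip_up A \<sigma>) t i - E \<sigma> t i \<le> (\<Sum>u\<in>A. flip_response t (blk u) i)"
  using assms(1,2,4)
proof (induction A rule: finite_induct)
  case empty
  then show ?case by (simp add: flip_up_def)
next
  case (insert x F)
  let ?\<rho> = "flip_up F \<sigma>"
  have IH: "E \<sigma> t i \<le> E ?\<rho> t i \<and> E ?\<rho> t i - E \<sigma> t i \<le> (\<Sum>u\<in>F. flip_response t (blk u) i)"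
    using insert by simp
  have x: "x \<in> verts n" "?\<rho> x = -1"
    using insert by (auto simp: flip_up_def)
  have "?\<rho> \<in> spin_configs n"
    using insert flip_up_in_spin_configs[OF _ assms(3)] by simp
  then have "E ?\<rho> t i \<le> E (?\<rho>(x := 1)) t i \<and> E (?\<rho>(x := 1)) t i - E ?\<rho> t i \<le> flip_response t (blk x) i"
    using exp_magnet_flip_bounds x assms(5) by blast
  moreover have "flip_up (insert x F) \<sigma> = ?\<rho>(x := 1)"
    by (auto simp: flip_up_def)
  ultimately show ?case
    using IH by (simp only: sum.insert[OF insert.hyps]) linarith
qed

lemma sum_flip_response:
  assumes "finite A"
  shows "(\<Sum>u\<in>A. flip_response t (blk u) i)
    = mat_pow_vec m Q t (\<lambda>j. 2 * real (card {u\<in>A. blk u = j}) / real n) i"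
proof -
  have "(\<Sum>u\<in>A. 1 * (if j = blk u then 2 / real n else 0)) = 2 * real (card {u\<in>A. blk u = j}) / real n"
    for j
  proof -
    have "(\<Sum>u\<in>A. 1 * (if j = blk u then 2 / real n else 0)) = (\<Sum>u\<in>A. if blk u = j then 2 / real n else 0)"
      by (rule sum.cong) auto
    also have "\<dots> = (\<Sum>u\<in>{u\<in>A. blk u = j}. 2 / real n)"
      by (rule sum.inter_filter[symmetric, OF assms])
    finally show ?thesis
      by simp
  qed
  then show ?thesis
    using mat_pow_vec_lincomb[OF assms, of m Q t "\<lambda>_. 1" "\<lambda>u j. if j = blk u then 2 / real n else 0"]
    by (simp add: flip_response_def)
qed

end

theorem lemma4p8:
  fixes m n :: nat and p :: "nat \<Rightarrow> real" and k :: "nat \<Rightarrow> nat \<Rightarrow> real" and \<beta> :: real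
    and blk :: "nat \<Rightarrow> nat" and \<sigma> \<sigma>' :: "nat \<Rightarrow> real" and t :: nat
  assumes m_pos: "m \<ge> 1"
    and p_pos: "\<forall>i<m. p i > 0"
    and p_sum: "(\<Sum>i<m. p i) = 1"
    and k_sym: "\<forall>i<m. \<forall>j<m. k i j = k j i"
    and k_pos: "\<forall>i<m. \<forall>j<m. k i j > 0"
    and beta_nonneg: "\<beta> \<ge> 0"
    and n_pos: "n \<ge> 1"
    and blk_range: "\<forall>v\<in>verts n. blk v < m"
    and blk_size: "\<forall>i<m. real (card {v\<in>verts n. blk v = i}) = real n * p i"
    and sigma: "\<sigma> \<in> spin_configs n" and sigma': "\<sigma>' \<in> spin_configs n"
    and start_ge: "\<forall>i<m. magnet n blk \<sigma> i \<ge> magnet n blk \<sigma>' i"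
  shows "\<forall>i<m.
           0 \<le> exp_magnet n blk k \<beta> \<sigma> t i - exp_magnet n blk k \<beta> \<sigma>' t i \<and>
           exp_magnet n blk k \<beta> \<sigma> t i - exp_magnet n blk k \<beta> \<sigma>' t i
             \<le> mat_pow_vec m (Qmat n p k \<beta>) t (\<lambda>j. magnet n blk \<sigma> j - magnet n blk \<sigma>' j) i"
proof -
  interpret ferro_block_glauber m n blk k \<beta> p
    using n_pos blk_range k_pos beta_nonneg blk_size by unfold_locales (auto simp: less_imp_le)
  obtain A where A: "A \<subseteq> verts n" "\<forall>u\<in>A. \<sigma>' u = -1"
    and A_magnet: "\<And>j. j < m \<Longrightarrow> 2 * real (card {u\<in>A. blk u = j}) / real n
      = magnet n blk \<sigma> j - magnet n blk \<sigma>' j"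
    using obtain_flip_set[OF sigma sigma'] start_ge by blast
  have finite_A: "finite A"
    using A(1) finite_verts finite_subset by blast
  have same_law: "E \<sigma> t i = E (flip_up A \<sigma>') t i" for i
    using sigma flip_up_in_spin_configs[OF A(1) sigma'] magnet_flip_up[OF A] A_magnet
    by (intro exp_magnet_eq_if_magnet_eq) auto
  show ?thesis
  proof (intro allI impI)
    fix i
    assume i: "i < m"
    have "(\<Sum>u\<in>A. flip_response t (blk u) i)
        = mat_pow_vec m Q t (\<lambda>j. magnet n blk \<sigma> j - magnet n blk \<sigma>' j) i"
      unfolding sum_flip_response[OF finite_A] by (rule mat_pow_vec_cong[OF A_magnet i])
    then show "0 \<le> E \<sigma> t i - E \<sigma>' t i
        \<and> E \<sigma> t i - E \<sigma>' t i \<le> mat_pow_vec m Q t (\<lambda>j. magnet n blk \<sigma> j - magnet n blk \<sigma>' j) i"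
      using exp_magnet_flip_up_bounds[OF finite_A A(1) sigma' A(2) i, where t = t] same_law[of i] by simp
  qed
qed

end
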